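(* Let $S$ be a finite Rhodes semisimple semigroup and let $\Omega$ be a finite semisimple partial $S$-set. Then the action of $S$ on $\Omega$ is faithful if and only if, for each $\mathsf{RM}$-irreducible $\mathscr J$-class $J$ of $S$: (1) $\Omega_J\neq\emptyset$; and (2) $\Omega_Je_J$ is a faithful $M_J$-set.
   Context: All semigroups are finite and act on the right. $\mathscr J$-classes are ordered by $J'\le J$ iff $S^1J'S^1\subseteq S^1JS^1$; a $\mathscr J$-class is regular if it contains an idempotent. For each regular $\mathscr J$-class $J$ fix an idempotent $e_J\in J$ and let $G_J$ be its maximal subgroup. For a regular $\mathscr J$-class $J$: $s\equiv_J t$ iff for all $x,y\in J$, $xsy\in J\iff xty\in J$, and if both lie in $J$ then $xsy=xty$; $s\equiv_{\mathsf{RM},J}t$ iff for all $x\in J$, $xs\in J\iff xt\in J$, and if both lie in $J$ then $xs=xt$. $S$ is Rhodes semisimple if $\bigcap_J\equiv_J$ (over regular $J$) is the equality relation. A regular $J$ is $\mathsf{RM}$-irreducible if $\bigcap_{J'<J}\equiv_{\mathsf{RM},J'}\not\subseteq\equiv_{\mathsf{RM},J}$ (over regular $J'<J$; empty intersection is universal). For such $J$, $M_J=\{g\in G_J\mid g\equiv_{\mathsf{RM},J'}e_J\ \forall\text{ regular }J'<J\}$. A partial $S$-set is a finite set $\Omega$ with a right action of $S$ by partial maps (equalities of possibly undefined expressions mean both undefined or both defined and equal); it is faithful if distinct elements act as distinct partial maps. The strong orbit of $\alpha$ is $\{\beta\in\Omega\mid \alpha S^1=\beta S^1\}$; it is null if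 $\mathscr O S\cap\mathscr O=\emptyset$ and transitive otherwise. $\Omega$ is semisimple if every strong orbit is transitive and $S$-invariant (if $\alpha\in\mathscr O$ and $\alpha s$ is defined then $\alpha s\in\mathscr O$). Each such strong orbit $\mathscr O$ is a partial $S$-set in its own right, and there is a unique minimal $\mathscr J$-class $J$ with $\mathscr O s\neq\emptyset$ for some $s\in J$; it is regular and called the apex of $\mathscr O$. $\Omega_J$ denotes the union of the strong orbits with apex $J$, and $\Omega_Je_J=\{\alpha e_J\mid\alpha\in\Omega_J,\ \alpha e_J \text{ defined}\}$, on which $G_J$ acts by permutations. *)

theory Defs
  imports Main
begin

text \<open>A finite semigroup is modelled by a type of class semigroup_mult and finite;
  the semigroup S is UNIV. Elements of S^1 are handled by writing out the four cases.\<close>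

definition ideal2 :: "'a::semigroup_mult set \<Rightarrow> 'a set" where
  "ideal2 A = A \<union> {x * a | x a. a \<in> A} \<union> {a * y | a y. a \<in> A}
              \<union> {x * a * y | x a y. a \<in> A}"

definition rideal :: "'a::semigroup_mult \<Rightarrow> 'a set" where
  "rideal a = {a} \<union> {a * y | y. True}"

definition lideal :: "'a::semigroup_mult \<Rightarrow> 'a set" where
  "lideal a = {a} \<union> {x * a | x. True}"

definition Jclass :: "'a::semigroup_mult \<Rightarrow> 'a set" where
  "Jclass a = {b. ideal2 {b} = ideal2 {a}}"

definition is_Jclass :: "'a::semigroup_mult set \<Rightarrow> bool" where
  "is_Jclass J \<longleftrightarrow> (\<exists>a. J = Jclass a)"

definition Jle :: "'a::semigroup_mult set \<Rightarrow> 'a set \<Rightarrow> bool" where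
  "Jle J' J \<longleftrightarrow> ideal2 J' \<subseteq> ideal2 J"

definition Jless :: "'a::semigroup_mult set \<Rightarrow> 'a set \<Rightarrow> bool" where
  "Jless J' J \<longleftrightarrow> Jle J' J \<and> J' \<noteq> J"

definition regularJ :: "'a::semigroup_mult set \<Rightarrow> bool" where
  "regularJ J \<longleftrightarrow> is_Jclass J \<and> (\<exists>e\<in>J. e * e = e)"

definition Hgroup :: "'a::semigroup_mult \<Rightarrow> 'a set" where
  "Hgroup e = {g. rideal g = rideal e \<and> lideal g = lideal e}"

definition equivJ :: "'a::semigroup_mult set \<Rightarrow> 'a \<Rightarrow> 'a \<Rightarrow> bool" where
  "equivJ J s t \<longleftrightarrow> (\<forall>x\<in>J. \<forall>y\<in>J. (x * s * y \<in> J \<longleftrightarrow> x * t * y \<in> J)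
                       \<and> (x * s * y \<in> J \<longrightarrow> x * s * y = x * t * y))"

definition equivRM :: "'a::semigroup_mult set \<Rightarrow> 'a \<Rightarrow> 'a \<Rightarrow> bool" where
  "equivRM J s t \<longleftrightarrow> (\<forall>x\<in>J. (x * s \<in> J \<longleftrightarrow> x * t \<in> J)
                       \<and> (x * s \<in> J \<longrightarrow> x * s = x * t))"

definition rhodes_semisimple :: "'a::semigroup_mult itself \<Rightarrow> bool" where
  "rhodes_semisimple _ \<longleftrightarrow>
     (\<forall>s t::'a. (\<forall>J. regularJ J \<longrightarrow> equivJ J s t) \<longrightarrow> s = t)"

definition RM_irreducible :: "'a::semigroup_mult set \<Rightarrow> bool" where
  "RM_irreducible J \<longleftrightarrow> regularJ J \<and>
     \<not> (\<forall>s t. (\<forall>J'. regularJ J' \<and> Jless J' J \<longrightarrow> equivRM J' s t) \<longrightarrow> equivRM J s t)"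

definition MJ :: "('a::semigroup_mult set \<Rightarrow> 'a) \<Rightarrow> 'a set \<Rightarrow> 'a set" where
  "MJ e J = {g \<in> Hgroup (e J). \<forall>J'. regularJ J' \<and> Jless J' J \<longrightarrow> equivRM J' g (e J)}"

definition partial_Sset :: "'b set \<Rightarrow> ('b \<Rightarrow> 'a::semigroup_mult \<Rightarrow> 'b option) \<Rightarrow> bool" where
  "partial_Sset \<Omega> act \<longleftrightarrow> finite \<Omega> \<and>
     (\<forall>\<alpha>\<in>\<Omega>. \<forall>s \<beta>. act \<alpha> s = Some \<beta> \<longrightarrow> \<beta> \<in> \<Omega>) \<and>
     (\<forall>\<alpha>\<in>\<Omega>. \<forall>s t. act \<alpha> (s * t) = (case act \<alpha> s of None \<Rightarrow> None | Some \<beta> \<Rightarrow> act \<beta> t))"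

definition faithful_action :: "'b set \<Rightarrow> ('b \<Rightarrow> 'a \<Rightarrow> 'b option) \<Rightarrow> 'a set \<Rightarrow> bool" where
  "faithful_action \<Omega> act T \<longleftrightarrow>
     (\<forall>s\<in>T. \<forall>t\<in>T. (\<forall>\<alpha>\<in>\<Omega>. act \<alpha> s = act \<alpha> t) \<longrightarrow> s = t)"

definition reach :: "('b \<Rightarrow> 'a \<Rightarrow> 'b option) \<Rightarrow> 'b \<Rightarrow> 'b set" where
  "reach act \<alpha> = {\<alpha>} \<union> {\<beta>. \<exists>s. act \<alpha> s = Some \<beta>}"

definition strong_orbit :: "'b set \<Rightarrow> ('b \<Rightarrow> 'a \<Rightarrow> 'b option) \<Rightarrow> 'b \<Rightarrow> 'b set" where
  "strong_orbit \<Omega> act \<alpha> = {\<beta>\<in>\<Omega>. reach act \<alpha> = reach act \<beta>}"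

definition strong_orbits :: "'b set \<Rightarrow> ('b \<Rightarrow> 'a \<Rightarrow> 'b option) \<Rightarrow> 'b set set" where
  "strong_orbits \<Omega> act = strong_orbit \<Omega> act ` \<Omega>"

definition orbit_image :: "('b \<Rightarrow> 'a \<Rightarrow> 'b option) \<Rightarrow> 'b set \<Rightarrow> 'b set" where
  "orbit_image act Orb = {\<beta>. \<exists>\<gamma>\<in>Orb. \<exists>s. act \<gamma> s = Some \<beta>}"

definition transitive_orbit :: "('b \<Rightarrow> 'a \<Rightarrow> 'b option) \<Rightarrow> 'b set \<Rightarrow> bool" where
  "transitive_orbit act Orb \<longleftrightarrow> orbit_image act Orb \<inter> Orb \<noteq> {}"

definition invariant_orbit :: "('b \<Rightarrow> 'a \<Rightarrow> 'b option) \<Rightarrow> 'b set \<Rightarrow> bool" where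
  "invariant_orbit act Orb \<longleftrightarrow> (\<forall>\<alpha>\<in>Orb. \<forall>s \<beta>. act \<alpha> s = Some \<beta> \<longrightarrow> \<beta> \<in> Orb)"

definition semisimple_Sset :: "'b set \<Rightarrow> ('b \<Rightarrow> 'a \<Rightarrow> 'b option) \<Rightarrow> bool" where
  "semisimple_Sset \<Omega> act \<longleftrightarrow>
     (\<forall>Orb\<in>strong_orbits \<Omega> act. transitive_orbit act Orb \<and> invariant_orbit act Orb)"

text \<open>J is the apex of Orb: the minimal J-class containing some s with Orb s nonempty
  (unique by the paper's remark).\<close>
definition is_apex :: "('b \<Rightarrow> 'a::semigroup_mult \<Rightarrow> 'b option) \<Rightarrow> 'b set \<Rightarrow> 'a set \<Rightarrow> bool" where
  "is_apex act Orb J \<longleftrightarrow> is_Jclass J \<and> (\<exists>s\<in>J. \<exists>\<alpha>\<in>Orb. act \<alpha> s \<noteq> None) \<and>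
     (\<forall>J'. is_Jclass J' \<and> (\<exists>s\<in>J'. \<exists>\<alpha>\<in>Orb. act \<alpha> s \<noteq> None) \<and> Jle J' J \<longrightarrow> J' = J)"

definition OmegaJ :: "'b set \<Rightarrow> ('b \<Rightarrow> 'a::semigroup_mult \<Rightarrow> 'b option) \<Rightarrow> 'a set \<Rightarrow> 'b set" where
  "OmegaJ \<Omega> act J = \<Union>{Orb \<in> strong_orbits \<Omega> act. is_apex act Orb J}"

definition OmegaJe :: "'b set \<Rightarrow> ('b \<Rightarrow> 'a::semigroup_mult \<Rightarrow> 'b option) \<Rightarrow> 'a set \<Rightarrow> 'a \<Rightarrow> 'b set" where
  "OmegaJe \<Omega> act J e = {\<beta>. \<exists>\<alpha>\<in>OmegaJ \<Omega> act J. act \<alpha> e = Some \<beta>}"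

end

(*
  Write s ~ t when s and t act identically on Omega. Every strong orbit has a regular apex K,
  and s, t act identically on an orbit as soon as they are RM-equivalent at its apex: each
  point of the orbit is the image of a point of the orbit under some x in K, and x s is
  defined there only if x s lies in K.

  If the action is faithful and J is RM-irreducible, pick s, t that are RM-equivalent below J
  but not at J, and x in J with x s <> x t. An orbit separating x s from x t must have apex J,
  so Omega_J is nonempty. Two elements of M_J act alike on every orbit whose apex is not J,
  and on orbits with apex J they act through e_J; hence M_J acts faithfully on Omega_J e_J.

  Conversely, induction along the J-order shows that s ~ t implies that s and t are
  RM-equivalent at every regular J; at an RM-reducible J this is inherited from below. At an
  RM-irreducible J, an orbit with apex J shows that ~ preserves J. By stability of finite
  semigroups, ~-related elements of an H-class in J can be sandwiched by e_J into M_J, where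
  faithfulness on Omega_J e_J makes them equal. So for x, x s in J the elements x s and x t
  are equivalent at every regular J-class, and Rhodes semisimplicity gives x s = x t.
*)
theory Submission
  imports Defs
begin

section \<open>The \<open>\<J>\<close>-preorder and Green's relations\<close>

definition leJ :: "'a::semigroup_mult \<Rightarrow> 'a \<Rightarrow> bool" where
  "leJ a b \<longleftrightarrow> a \<in> ideal2 {b}"

lemma leJ_iff: "leJ a b \<longleftrightarrow> a = b \<or> (\<exists>x. a = x * b) \<or> (\<exists>y. a = b * y) \<or> (\<exists>x y. a = x * b * y)"
  unfolding leJ_def ideal2_def by auto

lemma leJ_refl [simp]: "leJ a a"
  by (simp add: leJ_iff)

lemma leJ_mult_left [simp]: "leJ (x * a) a"
  and leJ_mult_right [simp]: "leJ (a * y) a"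
  by (auto simp: leJ_iff)

lemma leJ_mult_leftI: "leJ b c \<Longrightarrow> leJ (x * b) c"
  unfolding leJ_iff by (elim disjE exE) (simp_all add: mult.assoc[symmetric]; blast)+

lemma leJ_mult_rightI: "leJ b c \<Longrightarrow> leJ (b * y) c"
  unfolding leJ_iff by (elim disjE exE) (simp_all add: mult.assoc; blast)+

lemma leJ_trans: "leJ a b \<Longrightarrow> leJ b c \<Longrightarrow> leJ a c"
  by (subst (asm) leJ_iff) (auto intro: leJ_mult_leftI leJ_mult_rightI)

lemma mem_ideal2_iff: "x \<in> ideal2 A \<longleftrightarrow> (\<exists>a\<in>A. leJ x a)"
  unfolding ideal2_def leJ_iff by blast

lemma mem_Jclass_iff: "b \<in> Jclass a \<longleftrightarrow> leJ a b \<and> leJ b a"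
proof -
  have "b \<in> Jclass a \<longleftrightarrow> (\<forall>x. leJ x b \<longleftrightarrow> leJ x a)"
    by (simp add: Jclass_def mem_ideal2_iff set_eq_iff)
  then show ?thesis
    by (meson leJ_refl leJ_trans)
qed

lemma Jclass_self [simp]: "a \<in> Jclass a"
  by (simp add: mem_Jclass_iff)

lemma is_Jclass_Jclass [simp]: "is_Jclass (Jclass a)"
  by (auto simp: is_Jclass_def)

lemma Jclass_eq_iff: "Jclass a = Jclass b \<longleftrightarrow> leJ a b \<and> leJ b a"
  unfolding set_eq_iff mem_Jclass_iff by (meson leJ_refl leJ_trans)

lemma is_Jclass_eq_Jclass: "is_Jclass K \<Longrightarrow> k \<in> K \<Longrightarrow> K = Jclass k"
  unfolding is_Jclass_def by (metis Jclass_eq_iff mem_Jclass_iff)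

lemma ideal2_Jclass: "ideal2 (Jclass a) = {x. leJ x a}"
proof -
  have "x \<in> ideal2 (Jclass a) \<longleftrightarrow> leJ x a" for x
    unfolding mem_ideal2_iff by (metis Jclass_self leJ_trans mem_Jclass_iff)
  then show ?thesis by blast
qed

lemma Jle_Jclass_iff: "Jle (Jclass a) (Jclass b) \<longleftrightarrow> leJ a b"
  unfolding Jle_def ideal2_Jclass by (blast intro: leJ_trans leJ_refl)

lemma Jclass_betweenI:
  assumes "is_Jclass K" "a \<in> K" "b \<in> K" "leJ a c" "leJ c b"
  shows "c \<in> K"
  using assms by (metis is_Jclass_eq_Jclass leJ_trans mem_Jclass_iff)

lemma Jclass_leJ: "is_Jclass K \<Longrightarrow> a \<in> K \<Longrightarrow> b \<in> K \<Longrightarrow> leJ a b"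
  by (metis is_Jclass_eq_Jclass mem_Jclass_iff)

lemma Jle_iff_leJ:
  assumes "is_Jclass A" "is_Jclass B" "a \<in> A" "b \<in> B"
  shows "Jle A B \<longleftrightarrow> leJ a b"
  using assms is_Jclass_eq_Jclass Jle_Jclass_iff by metis

lemma Jless_imp_card_ideal2_less:
  fixes A :: "'a::{semigroup_mult,finite} set"
  assumes "is_Jclass A" "is_Jclass B" "Jless A B"
  shows "card (ideal2 A) < card (ideal2 B)"
proof -
  obtain a b where ab: "A = Jclass a" "B = Jclass b"
    using assms(1,2) by (auto simp: is_Jclass_def)
  have "ideal2 A \<subset> ideal2 B"
    using assms(3) unfolding Jless_def Jle_def ab ideal2_Jclass
    by (metis Jclass_eq_iff mem_Collect_eq leJ_refl psubsetI)
  then show ?thesis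
    by (simp add: psubset_card_mono)
qed

lemma mem_rideal_iff: "x \<in> rideal a \<longleftrightarrow> x = a \<or> (\<exists>y. x = a * y)"
  by (auto simp: rideal_def)

lemma mem_lideal_iff: "x \<in> lideal a \<longleftrightarrow> x = a \<or> (\<exists>y. x = y * a)"
  by (auto simp: lideal_def)

lemma self_mem_rideal [simp]: "a \<in> rideal a"
  and mult_mem_rideal [simp]: "a * y \<in> rideal a"
  by (auto simp: mem_rideal_iff)

lemma self_mem_lideal [simp]: "a \<in> lideal a"
  and mult_mem_lideal [simp]: "x * a \<in> lideal a"
  by (auto simp: mem_lideal_iff)

lemma rideal_trans: "a \<in> rideal b \<Longrightarrow> b \<in> rideal c \<Longrightarrow> a \<in> rideal c"
  unfolding mem_rideal_iff by (elim disjE exE) (simp_all add: mult.assoc; blast)+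

lemma lideal_trans: "a \<in> lideal b \<Longrightarrow> b \<in> lideal c \<Longrightarrow> a \<in> lideal c"
  unfolding mem_lideal_iff by (elim disjE exE) (simp_all add: mult.assoc[symmetric]; blast)+

lemma rideal_eq_iff: "rideal a = rideal b \<longleftrightarrow> a \<in> rideal b \<and> b \<in> rideal a"
  by (metis rideal_trans self_mem_rideal subsetI subset_antisym)

lemma lideal_eq_iff: "lideal a = lideal b \<longleftrightarrow> a \<in> lideal b \<and> b \<in> lideal a"
  by (metis lideal_trans self_mem_lideal subsetI subset_antisym)

lemma rideal_imp_leJ: "x \<in> rideal a \<Longrightarrow> leJ x a"
  by (auto simp: mem_rideal_iff)

section \<open>Stability of finite semigroups\<close>

text \<open>\<open>spow c n\<close> is \<open>c\<^sup>n\<^sup>+\<^sup>1\<close>: a semigroup has no identity to serve as \<open>c\<^sup>0\<close>.\<close>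
primrec spow :: "'a::semigroup_mult \<Rightarrow> nat \<Rightarrow> 'a" where
  "spow c 0 = c"
| "spow c (Suc n) = c * spow c n"

lemma spow_add: "spow c m * spow c n = spow c (Suc (m + n))"
  by (induct m) (simp_all add: mult.assoc)

lemma spow_Suc_right: "spow c (Suc n) = spow c n * c"
  using spow_add[of c n 0] by simp

lemma leJ_spow: "leJ (spow c n) c"
  by (cases n) simp_all

lemma spow_eventually_periodic:
  fixes c :: "'a::{semigroup_mult,finite}"
  obtains i p where "0 < p" "\<And>m. i \<le> m \<Longrightarrow> spow c (m + p) = spow c m"
proof -
  have "\<not> inj (spow c)"
    using finite_imageD[of "spow c" UNIV] by auto
  then obtain i j where "i < j" "spow c i = spow c j"
    unfolding inj_def by (metis linorder_neqE_nat)
  have period: "spow c (m + (j - i)) = spow c m" if "i \<le> m" for m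
    using that
  proof (induct m rule: dec_induct)
    case base
    show ?case using \<open>i < j\<close> \<open>spow c i = spow c j\<close> by simp
  qed simp
  show thesis
    by (rule that[of "j - i" i]) (use \<open>i < j\<close> period in auto)
qed

lemma ex_idempotent_spow: "\<exists>n. spow (c::'a::{semigroup_mult,finite}) n * spow c n = spow c n"
proof -
  obtain i p where "0 < p" and per: "\<And>m. i \<le> m \<Longrightarrow> spow c (m + p) = spow c m"
    using spow_eventually_periodic[of c] by blast
  have per_mult: "spow c (m + q * p) = spow c m" if "i \<le> m" for m q
  proof (induct q)
    case (Suc q)
    have "spow c (m + Suc q * p) = spow c ((m + q * p) + p)"
      by (simp add: algebra_simps)
    also have "\<dots> = spow c (m + q * p)"
      using that by (intro per) simp
    finally show ?case
      using Suc by simp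
  qed simp
  obtain p' where "p = Suc p'"
    using \<open>0 < p\<close> gr0_implies_Suc by blast
  define n where "n = i + p' * Suc i"
  have "Suc (n + n) = n + Suc i * p"
    unfolding n_def \<open>p = Suc p'\<close> by simp
  then have "spow c n * spow c n = spow c (n + Suc i * p)"
    by (simp only: spow_add)
  also have "\<dots> = spow c n"
    using per_mult[of n "Suc i"] by (simp add: n_def)
  finally show ?thesis
    by blast
qed

lemma mult_spow_mem_rideal: "a * spow c n \<in> rideal (a * c)"
  by (cases n) (simp_all add: mult.assoc[symmetric])

lemma spow_mult_mem_lideal: "spow c n * a \<in> lideal (c * a)"
  by (cases n) (simp_all only: spow.simps(1) spow_Suc_right mult.assoc mult_mem_lideal self_mem_lideal)

lemma stable_right:
  fixes a :: "'a::{semigroup_mult,finite}"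
  assumes "a = x * a * c"
  shows "a \<in> rideal (a * c)"
proof -
  obtain n where idem: "spow c n * spow c n = spow c n"
    using ex_idempotent_spow by blast
  have "\<exists>x'. a = x' * a * spow c n"
  proof (induct n)
    case 0
    show ?case using assms by (metis spow.simps(1))
  next
    case (Suc n)
    then obtain x' where "a = x' * a * spow c n" by blast
    then have "a = x' * (x * a * c) * spow c n"
      using assms by simp
    then show ?case
      by (metis mult.assoc spow.simps(2))
  qed
  then obtain x' where "a = x' * a * spow c n" by blast
  then have "a * spow c n = a"
    by (metis idem mult.assoc)
  then show ?thesis
    by (metis mult_spow_mem_rideal)
qed

lemma stable_left:
  fixes a :: "'a::{semigroup_mult,finite}"
  assumes "a = c * a * x"
  shows "a \<in> lideal (c * a)"
proof -
  obtain n where idem: "spow c n * spow c n = spow c n"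
    using ex_idempotent_spow by blast
  have "\<exists>x'. a = spow c n * a * x'"
  proof (induct n)
    case 0
    show ?case using assms by (metis spow.simps(1))
  next
    case (Suc n)
    then obtain x' where "a = spow c n * a * x'" by blast
    then have "a = spow c n * (c * a * x) * x'"
      using assms by simp
    then show ?case
      by (metis mult.assoc spow_Suc_right)
  qed
  then obtain x' where "a = spow c n * a * x'" by blast
  then have "spow c n * a = a"
    by (metis idem mult.assoc)
  then show ?thesis
    by (metis spow_mult_mem_lideal)
qed

lemma leJ_mult_imp_rideal:
  fixes a :: "'a::{semigroup_mult,finite}"
  assumes "leJ a (a * b)"
  shows "a \<in> rideal (a * b)"
proof -
  from assms consider "a \<in> rideal (a * b)" | x where "a = x * a * b"
    | x y where "a = x * a * (b * y)"
    unfolding leJ_iff by (metis mult.assoc mult_mem_rideal self_mem_rideal)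
  then show ?thesis
  proof cases
    case (3 x y)
    then have "a \<in> rideal (a * (b * y))" by (rule stable_right)
    then show ?thesis by (metis mult.assoc mult_mem_rideal rideal_trans)
  qed (simp_all add: stable_right)
qed

lemma leJ_mult_imp_lideal:
  fixes a :: "'a::{semigroup_mult,finite}"
  assumes "leJ a (b * a)"
  shows "a \<in> lideal (b * a)"
proof -
  from assms consider "a \<in> lideal (b * a)" | y where "a = b * a * y"
    | x y where "a = (x * b) * a * y"
    unfolding leJ_iff by (metis mult.assoc mult_mem_lideal self_mem_lideal)
  then show ?thesis
  proof cases
    case (3 x y)
    then have "a \<in> lideal (x * b * a)" by (rule stable_left)
    then show ?thesis by (metis mult.assoc mult_mem_lideal lideal_trans)
  qed (simp_all add: stable_left)
qed

section \<open>RM-equivalence and maximal subgroups\<close>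

lemma equivJ_if_equivRM_mult_right: "(\<And>y. equivRM J (s * y) (t * y)) \<Longrightarrow> equivJ J s t"
  unfolding equivJ_def equivRM_def mult.assoc by blast

lemma equivRM_mult_left:
  assumes "is_Jclass K" "equivRM K s t"
  shows "equivRM K (x * s) (x * t)"
  unfolding equivRM_def
proof
  fix z assume "z \<in> K"
  have "z * x \<in> K" if "z * (x * u) \<in> K" for u
  proof (rule Jclass_betweenI[OF assms(1) that \<open>z \<in> K\<close>])
    show "leJ (z * (x * u)) (z * x)"
      by (simp add: mult.assoc[symmetric])
  qed simp
  then show "(z * (x * s) \<in> K \<longleftrightarrow> z * (x * t) \<in> K) \<and> (z * (x * s) \<in> K \<longrightarrow> z * (x * s) = z * (x * t))"
    using assms(2) unfolding equivRM_def mult.assoc[symmetric] by blast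
qed

lemma equivRM_if_not_leJ:
  assumes "is_Jclass K" "k \<in> K" "\<not> leJ k c" "leJ s c" "leJ t c"
  shows "equivRM K s t"
proof -
  have "z * u \<notin> K" if "leJ u c" for z u
  proof
    assume "z * u \<in> K"
    then have "leJ k (z * u)"
      using Jclass_leJ assms(1,2) by blast
    then have "leJ k c"
      using leJ_trans leJ_mult_left that by blast
    with assms(3) show False ..
  qed
  then show ?thesis
    unfolding equivRM_def using assms(4,5) by blast
qed

lemma Hgroup_mult_idem:
  assumes "f * f = f" "g \<in> Hgroup f"
  shows "f * g = g" "leJ g f"
proof -
  have "rideal g = rideal f"
    using assms(2) unfolding Hgroup_def by simp
  then have "g \<in> rideal f"
    using self_mem_rideal by blast
  then show "f * g = g"
    unfolding mem_rideal_iff by (auto simp: mult.assoc[symmetric] assms(1))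
  show "leJ g f"
    using \<open>g \<in> rideal f\<close> by (rule rideal_imp_leJ)
qed

lemma MJ_equivRM:
  assumes "regularJ K" "K \<noteq> J" "is_Jclass J" "e J \<in> J" "e J * e J = e J"
    and "g \<in> MJ e J" "h \<in> MJ e J"
  shows "equivRM K g h"
proof (cases "Jle K J")
  case True
  with \<open>K \<noteq> J\<close> have "Jless K J"
    unfolding Jless_def by blast
  then have "equivRM K g (e J)" "equivRM K h (e J)"
    using assms(1,6,7) unfolding MJ_def by simp_all
  then show ?thesis
    unfolding equivRM_def by metis
next
  case False
  obtain k where "is_Jclass K" "k \<in> K"
    using \<open>regularJ K\<close> unfolding regularJ_def by blast
  with False have "\<not> leJ k (e J)"
    using Jle_iff_leJ assms(3,4) by blast
  moreover have "g \<in> Hgroup (e J)" "h \<in> Hgroup (e J)"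
    using assms(6,7) unfolding MJ_def by simp_all
  then have "leJ g (e J)" "leJ h (e J)"
    using Hgroup_mult_idem(2)[OF assms(5)] by blast+
  ultimately show ?thesis
    using equivRM_if_not_leJ \<open>is_Jclass K\<close> \<open>k \<in> K\<close> by blast
qed

lemma sandwich_idempotent:
  assumes idem: "f * f = f" and "leJ f w"
  obtains p q where "f = p * w * q" "p = f * p" "q = q * f"
proof -
  have left: "f * (f * x) = f * x" for x
    by (simp add: idem flip: mult.assoc)
  have right: "y * f = y * f * f" for y
    by (simp add: idem mult.assoc)
  from \<open>leJ f w\<close> consider "f = w" | x where "f = x * w" | y where "f = w * y"
    | x y where "f = x * w * y"
    unfolding leJ_iff by blast
  then show thesis
  proof cases
    case 1
    then show thesis
      using that[of f f] idem by simp
  next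
    case (2 x)
    then show thesis
      using that[of "f * x" f] idem left by (simp add: mult.assoc)
  next
    case (3 y)
    then show thesis
      using that[of f "y * f"] idem right by (simp add: mult.assoc)
  next
    case (4 x y)
    then show thesis
      using that[of "f * x" "y * f"] idem left right by (simp add: mult.assoc)
  qed
qed

lemma regular_fixes_rideal: "a * p * a = a \<Longrightarrow> w \<in> rideal a \<Longrightarrow> a * p * w = w"
  unfolding mem_rideal_iff by (metis mult.assoc)

lemma regular_fixes_lideal: "a * p * a = a \<Longrightarrow> w \<in> lideal a \<Longrightarrow> w * p * a = w"
  unfolding mem_lideal_iff by (metis mult.assoc)

section \<open>Strong orbits and their apex\<close>

locale partial_action =
  fixes \<Omega> :: "'b set" and act :: "'b \<Rightarrow> 'a::semigroup_mult \<Rightarrow> 'b option"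
  assumes partial_Sset: "partial_Sset \<Omega> act"
begin

lemma act_closed: "\<alpha> \<in> \<Omega> \<Longrightarrow> act \<alpha> s = Some \<beta> \<Longrightarrow> \<beta> \<in> \<Omega>"
  using partial_Sset unfolding partial_Sset_def by blast

lemma act_mult: "\<alpha> \<in> \<Omega> \<Longrightarrow> act \<alpha> (s * t) = (case act \<alpha> s of None \<Rightarrow> None | Some \<beta> \<Rightarrow> act \<beta> t)"
  using partial_Sset unfolding partial_Sset_def by blast

lemma act_mult_Some: "\<alpha> \<in> \<Omega> \<Longrightarrow> act \<alpha> s = Some \<beta> \<Longrightarrow> act \<alpha> (s * t) = act \<beta> t"
  by (simp add: act_mult)

lemma act_mult_None: "\<alpha> \<in> \<Omega> \<Longrightarrow> act \<alpha> s = None \<Longrightarrow> act \<alpha> (s * t) = None"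
  by (simp add: act_mult)

lemma act_mult_defined:
  assumes "\<alpha> \<in> \<Omega>" "act \<alpha> (s * t) \<noteq> None"
  obtains \<beta> where "act \<alpha> s = Some \<beta>" "act \<beta> t \<noteq> None"
  using assms act_mult_None act_mult_Some by fastforce

lemma act_spow_fixed: "\<beta> \<in> \<Omega> \<Longrightarrow> act \<beta> c = Some \<beta> \<Longrightarrow> act \<beta> (spow c n) = Some \<beta>"
  by (induct n) (simp_all add: act_mult_Some)

definition same_action :: "'a \<Rightarrow> 'a \<Rightarrow> bool" where
  "same_action s t \<longleftrightarrow> (\<forall>\<alpha>\<in>\<Omega>. act \<alpha> s = act \<alpha> t)"

lemma faithful_iff_same_action_eq:
  "faithful_action \<Omega> act UNIV \<longleftrightarrow> (\<forall>s t. same_action s t \<longrightarrow> s = t)"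
  unfolding faithful_action_def same_action_def by blast

lemma same_action_sym: "same_action s t \<Longrightarrow> same_action t s"
  by (simp add: same_action_def)

lemma same_action_mult_left: "same_action s t \<Longrightarrow> same_action (x * s) (x * t)"
  unfolding same_action_def by (metis act_closed act_mult_None act_mult_Some not_None_eq)

lemma same_action_mult_right: "same_action s t \<Longrightarrow> same_action (s * y) (t * y)"
  unfolding same_action_def by (simp add: act_mult)

lemma strong_orbits_subset: "Ob \<in> strong_orbits \<Omega> act \<Longrightarrow> Ob \<subseteq> \<Omega>"
  by (auto simp: strong_orbits_def strong_orbit_def)

lemma strong_orbit_reach:
  assumes "Ob \<in> strong_orbits \<Omega> act" "\<beta> \<in> Ob" "\<gamma> \<in> Ob"
  shows "\<gamma> = \<beta> \<or> (\<exists>s. act \<beta> s = Some \<gamma>)"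
proof -
  from assms obtain \<alpha> where "reach act \<alpha> = reach act \<beta>" "reach act \<alpha> = reach act \<gamma>"
    by (auto simp: strong_orbits_def strong_orbit_def)
  then have "\<gamma> \<in> reach act \<beta>"
    by (simp add: reach_def)
  then show ?thesis
    by (auto simp: reach_def)
qed

lemma mem_own_strong_orbit: "\<alpha> \<in> \<Omega> \<Longrightarrow> \<alpha> \<in> strong_orbit \<Omega> act \<alpha>"
  by (simp add: strong_orbit_def)

lemma strong_orbit_mem_strong_orbits: "\<alpha> \<in> \<Omega> \<Longrightarrow> strong_orbit \<Omega> act \<alpha> \<in> strong_orbits \<Omega> act"
  by (simp add: strong_orbits_def)

end

locale semisimple_action = partial_action \<Omega> act
  for \<Omega> :: "'b set" and act :: "'b \<Rightarrow> 'a::{semigroup_mult,finite} \<Rightarrow> 'b option" +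
  assumes semisimple: "semisimple_Sset \<Omega> act"
begin

lemma strong_orbit_act_closed:
  "Ob \<in> strong_orbits \<Omega> act \<Longrightarrow> \<beta> \<in> Ob \<Longrightarrow> act \<beta> s = Some \<gamma> \<Longrightarrow> \<gamma> \<in> Ob"
  using semisimple unfolding semisimple_Sset_def invariant_orbit_def by blast

lemma strong_orbit_ex_defined:
  assumes "Ob \<in> strong_orbits \<Omega> act"
  obtains \<beta> s \<gamma> where "\<beta> \<in> Ob" "act \<beta> s = Some \<gamma>"
  using assms semisimple
  unfolding semisimple_Sset_def transitive_orbit_def orbit_image_def by blast

lemma strong_orbit_reach_rideal:
  assumes Ob: "Ob \<in> strong_orbits \<Omega> act" and "\<delta> \<in> Ob" "act \<delta> s = Some \<delta>'" "\<beta> \<in> Ob"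
  shows "\<exists>v\<in>rideal s. act \<delta> v = Some \<beta>"
proof -
  have "\<delta>' \<in> Ob"
    using assms strong_orbit_act_closed by blast
  then consider "\<beta> = \<delta>'" | v where "act \<delta>' v = Some \<beta>"
    using strong_orbit_reach[OF Ob _ \<open>\<beta> \<in> Ob\<close>] by blast
  then show ?thesis
  proof cases
    case (2 v)
    have "\<delta> \<in> \<Omega>"
      using assms strong_orbits_subset by blast
    then have "act \<delta> (s * v) = Some \<beta>"
      using assms(3) 2 by (simp add: act_mult_Some)
    then show ?thesis
      using mult_mem_rideal by blast
  qed (use assms(3) self_mem_rideal in blast)
qed

lemma strong_orbit_idempotent_fixing:
  assumes Ob: "Ob \<in> strong_orbits \<Omega> act" and "\<beta> \<in> Ob" "act \<beta> s = Some \<gamma>"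
  obtains f where "f * f = f" "leJ f s" "act \<beta> f = Some \<beta>"
proof -
  obtain w where "w \<in> rideal s" and w: "act \<beta> w = Some \<beta>"
    using strong_orbit_reach_rideal[OF assms assms(2)] by blast
  obtain n where "spow w n * spow w n = spow w n"
    using ex_idempotent_spow by blast
  moreover have "leJ (spow w n) s"
    using \<open>w \<in> rideal s\<close> leJ_spow leJ_trans rideal_imp_leJ by blast
  moreover have "act \<beta> (spow w n) = Some \<beta>"
    using assms strong_orbits_subset act_spow_fixed w by blast
  ultimately show thesis
    using that by blast
qed

lemma strong_orbit_acts_upward:
  assumes Ob: "Ob \<in> strong_orbits \<Omega> act" and "\<alpha> \<in> Ob" "act \<alpha> w \<noteq> None" "leJ w u"
  shows "\<exists>\<beta>\<in>Ob. act \<beta> u \<noteq> None"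
proof -
  have "\<alpha> \<in> \<Omega>"
    using Ob \<open>\<alpha> \<in> Ob\<close> strong_orbits_subset by blast
  then have "act \<alpha> u \<noteq> None \<or> (\<exists>x. act \<alpha> (x * u) \<noteq> None)"
    using \<open>leJ w u\<close> \<open>act \<alpha> w \<noteq> None\<close> act_mult_None unfolding leJ_iff by metis
  then show ?thesis
  proof
    assume "\<exists>x. act \<alpha> (x * u) \<noteq> None"
    then obtain x \<beta> where "act \<alpha> x = Some \<beta>" "act \<beta> u \<noteq> None"
      using act_mult_defined[OF \<open>\<alpha> \<in> \<Omega>\<close>] by metis
    then show ?thesis
      using strong_orbit_act_closed Ob \<open>\<alpha> \<in> Ob\<close> by blast
  qed (use \<open>\<alpha> \<in> Ob\<close> in blast)
qed

lemma apex_minimal: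
  assumes "is_apex act Ob K" "k \<in> K" "leJ u k" "\<alpha> \<in> Ob" "act \<alpha> u \<noteq> None"
  shows "u \<in> K"
proof -
  have "K = Jclass k"
    using assms(1,2) is_Jclass_eq_Jclass unfolding is_apex_def by blast
  have "Jclass u = K"
    using assms unfolding is_apex_def
    by (metis Jclass_self Jle_Jclass_iff \<open>K = Jclass k\<close> is_Jclass_Jclass)
  then show ?thesis
    by auto
qed

lemma apex_leJ:
  assumes Ob: "Ob \<in> strong_orbits \<Omega> act" and ap: "is_apex act Ob K"
    and "k \<in> K" "\<beta> \<in> Ob" "act \<beta> s \<noteq> None"
  shows "leJ k s"
proof -
  from ap obtain s0 \<delta> \<delta>' where "s0 \<in> K" "\<delta> \<in> Ob" "act \<delta> s0 = Some \<delta>'"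
    unfolding is_apex_def by blast
  then obtain v where "v \<in> rideal s0" and v: "act \<delta> v = Some \<beta>"
    using strong_orbit_reach_rideal Ob \<open>\<beta> \<in> Ob\<close> by blast
  have "act \<delta> (v * s) \<noteq> None"
    using v assms(5) act_mult_Some Ob \<open>\<delta> \<in> Ob\<close> strong_orbits_subset by (metis subsetD)
  moreover have "leJ (v * s) s0"
    using \<open>v \<in> rideal s0\<close> leJ_mult_rightI rideal_imp_leJ by blast
  ultimately have "v * s \<in> K"
    using apex_minimal ap \<open>s0 \<in> K\<close> \<open>\<delta> \<in> Ob\<close> by blast
  then show ?thesis
    using Jclass_leJ ap \<open>k \<in> K\<close> leJ_trans unfolding is_apex_def by fastforce
qed

lemma apex_idempotent:
  assumes Ob: "Ob \<in> strong_orbits \<Omega> act" and ap: "is_apex act Ob K"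
  obtains f \<delta> where "f \<in> K" "f * f = f" "\<delta> \<in> Ob" "act \<delta> f = Some \<delta>"
proof -
  from ap obtain s0 \<delta> \<delta>' where "s0 \<in> K" "\<delta> \<in> Ob" "act \<delta> s0 = Some \<delta>'"
    unfolding is_apex_def by blast
  moreover obtain f where "f * f = f" "leJ f s0" "act \<delta> f = Some \<delta>"
    using strong_orbit_idempotent_fixing Ob calculation(2,3) by blast
  ultimately show thesis
    using that apex_minimal[OF ap] by (metis option.distinct(1))
qed

lemma regularJ_apex: "Ob \<in> strong_orbits \<Omega> act \<Longrightarrow> is_apex act Ob K \<Longrightarrow> regularJ K"
  unfolding regularJ_def by (metis apex_idempotent is_apex_def)

lemma apex_acts:
  assumes Ob: "Ob \<in> strong_orbits \<Omega> act" and ap: "is_apex act Ob K" and "u \<in> K"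
  shows "\<exists>\<beta>\<in>Ob. act \<beta> u \<noteq> None"
proof -
  obtain f \<delta> where "f \<in> K" "\<delta> \<in> Ob" "act \<delta> f = Some \<delta>"
    using apex_idempotent[OF Ob ap] by metis
  moreover have "leJ f u"
    using Jclass_leJ ap \<open>f \<in> K\<close> \<open>u \<in> K\<close> unfolding is_apex_def by blast
  ultimately show ?thesis
    using strong_orbit_acts_upward[OF Ob] by blast
qed

lemma apex_reaches:
  assumes Ob: "Ob \<in> strong_orbits \<Omega> act" and ap: "is_apex act Ob K" and "\<beta> \<in> Ob"
  obtains \<gamma> x where "\<gamma> \<in> Ob" "x \<in> K" "act \<gamma> x = Some \<beta>"
proof -
  from ap obtain s0 \<delta> \<delta>' where "s0 \<in> K" "\<delta> \<in> Ob" "act \<delta> s0 = Some \<delta>'"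
    unfolding is_apex_def by blast
  moreover obtain v where "v \<in> rideal s0" "act \<delta> v = Some \<beta>"
    using strong_orbit_reach_rideal Ob calculation(2,3) \<open>\<beta> \<in> Ob\<close> by blast
  ultimately show thesis
    using that apex_minimal[OF ap] rideal_imp_leJ by (metis option.distinct(1))
qed

lemma apex_equivRM_imp_act_eq:
  assumes Ob: "Ob \<in> strong_orbits \<Omega> act" and ap: "is_apex act Ob K"
    and eq: "equivRM K s t" and "\<beta> \<in> Ob"
  shows "act \<beta> s = act \<beta> t"
proof -
  obtain \<gamma> x where "\<gamma> \<in> Ob" "x \<in> K" and x: "act \<gamma> x = Some \<beta>"
    using apex_reaches[OF Ob ap \<open>\<beta> \<in> Ob\<close>] by blast
  have "\<gamma> \<in> \<Omega>"
    using Ob \<open>\<gamma> \<in> Ob\<close> strong_orbits_subset by blast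
  then have act_\<beta>: "act \<beta> s = act \<gamma> (x * s)" "act \<beta> t = act \<gamma> (x * t)"
    using act_mult_Some x by simp_all
  show ?thesis
  proof (cases "x * s \<in> K")
    case True
    then show ?thesis
      using eq \<open>x \<in> K\<close> act_\<beta> unfolding equivRM_def by metis
  next
    case False
    then have "x * t \<notin> K"
      using eq \<open>x \<in> K\<close> unfolding equivRM_def by blast
    with False show ?thesis
      using act_\<beta> apex_minimal[OF ap \<open>x \<in> K\<close> _ \<open>\<gamma> \<in> Ob\<close>] by (metis leJ_mult_right)
  qed
qed

lemma ex_apex:
  assumes Ob: "Ob \<in> strong_orbits \<Omega> act"
  obtains K where "is_apex act Ob K"
proof -
  define acts where "acts s \<longleftrightarrow> (\<exists>\<alpha>\<in>Ob. act \<alpha> s \<noteq> None)" for s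
  obtain s0 where "acts s0"
    using strong_orbit_ex_defined[OF Ob] unfolding acts_def by (metis option.distinct(1))
  then obtain s where s: "acts s"
    and least: "\<And>s'. acts s' \<Longrightarrow> card {x. leJ x s} \<le> card {x. leJ x s'}"
    using ex_has_least_nat[of acts s0 "\<lambda>s. card {x. leJ x s}"] by blast
  have "is_apex act Ob (Jclass s)"
    unfolding is_apex_def
  proof (intro conjI allI impI)
    show "is_Jclass (Jclass s)"
      by simp
    show "\<exists>s'\<in>Jclass s. \<exists>\<alpha>\<in>Ob. act \<alpha> s' \<noteq> None"
      using s Jclass_self unfolding acts_def by blast
  next
    fix J' assume J': "is_Jclass J' \<and> (\<exists>s'\<in>J'. \<exists>\<alpha>\<in>Ob. act \<alpha> s' \<noteq> None) \<and> Jle J' (Jclass s)"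
    then obtain s' where "acts s'" "J' = Jclass s'"
      unfolding acts_def using is_Jclass_eq_Jclass by blast
    then have "{x. leJ x s'} \<subseteq> {x. leJ x s}"
      using J' Jle_Jclass_iff leJ_trans by blast
    moreover have "card {x. leJ x s} \<le> card {x. leJ x s'}"
      using least \<open>acts s'\<close> by blast
    ultimately have "{x. leJ x s'} = {x. leJ x s}"
      by (intro card_seteq) simp_all
    then show "J' = Jclass s"
      using \<open>J' = Jclass s'\<close> Jclass_eq_iff by blast
  qed
  then show thesis
    using that by blast
qed

lemma ex_apex_orbit:
  assumes "\<alpha> \<in> \<Omega>"
  obtains Ob K where "Ob \<in> strong_orbits \<Omega> act" "\<alpha> \<in> Ob" "is_apex act Ob K"
  using assms ex_apex mem_own_strong_orbit strong_orbit_mem_strong_orbits by metis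

end

section \<open>Necessity of the conditions\<close>

context semisimple_action
begin

lemma faithful_imp_OmegaJ_nonempty:
  assumes faithful: "faithful_action \<Omega> act UNIV" and irr: "RM_irreducible J"
  shows "OmegaJ \<Omega> act J \<noteq> {}"
proof -
  obtain s t where below: "\<And>J'. regularJ J' \<Longrightarrow> Jless J' J \<Longrightarrow> equivRM J' s t"
    and "\<not> equivRM J s t"
    using irr unfolding RM_irreducible_def by blast
  then obtain x where "x \<in> J" "\<not> ((x * s \<in> J \<longleftrightarrow> x * t \<in> J) \<and> (x * s \<in> J \<longrightarrow> x * s = x * t))"
    unfolding equivRM_def by blast
  then have "x * s \<noteq> x * t"
    by auto
  then obtain \<alpha> where "\<alpha> \<in> \<Omega>" and \<alpha>: "act \<alpha> (x * s) \<noteq> act \<alpha> (x * t)"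
    using faithful unfolding faithful_action_def by blast
  obtain Ob K where Ob: "Ob \<in> strong_orbits \<Omega> act" "\<alpha> \<in> Ob" and ap: "is_apex act Ob K"
    using ex_apex_orbit[OF \<open>\<alpha> \<in> \<Omega>\<close>] .
  have K: "is_Jclass K" "regularJ K"
    using ap regularJ_apex[OF Ob(1)] unfolding is_apex_def by blast+
  have not_RM: "\<not> equivRM K (x * s) (x * t)"
    using apex_equivRM_imp_act_eq[OF Ob(1) ap _ Ob(2)] \<alpha> by blast
  then obtain z where "z \<in> K" "z * (x * s) \<in> K \<or> z * (x * t) \<in> K"
    unfolding equivRM_def by blast
  then have "leJ z x"
    using Jclass_leJ[OF K(1) \<open>z \<in> K\<close>] leJ_trans[OF _ leJ_trans[OF leJ_mult_left leJ_mult_right]]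
    by blast
  moreover have "K = Jclass z" "J = Jclass x"
    using K(1) \<open>z \<in> K\<close> irr \<open>x \<in> J\<close> is_Jclass_eq_Jclass
    unfolding RM_irreducible_def regularJ_def by blast+
  ultimately have "Jle K J"
    by (simp add: Jle_Jclass_iff)
  moreover have "\<not> Jless K J"
    using below K not_RM equivRM_mult_left by blast
  ultimately have "K = J"
    unfolding Jless_def by blast
  then show ?thesis
    unfolding OmegaJ_def using Ob ap by blast
qed

lemma faithful_imp_MJ_faithful:
  assumes faithful: "faithful_action \<Omega> act UNIV" and irr: "RM_irreducible J"
    and e: "e J \<in> J" "e J * e J = e J"
  shows "faithful_action (OmegaJe \<Omega> act J (e J)) act (MJ e J)"
  unfolding faithful_action_def
proof (intro ballI impI)
  fix g h assume g: "g \<in> MJ e J" and h: "h \<in> MJ e J"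
    and eq_on: "\<forall>\<alpha>\<in>OmegaJe \<Omega> act J (e J). act \<alpha> g = act \<alpha> h"
  have "is_Jclass J"
    using irr unfolding RM_irreducible_def regularJ_def by blast
  have "g \<in> Hgroup (e J)" "h \<in> Hgroup (e J)"
    using g h unfolding MJ_def by simp_all
  then have "e J * g = g" "e J * h = h"
    using Hgroup_mult_idem(1)[OF e(2)] by blast+
  have "act \<alpha> g = act \<alpha> h" if "\<alpha> \<in> \<Omega>" for \<alpha>
  proof -
    obtain Ob K where Ob: "Ob \<in> strong_orbits \<Omega> act" "\<alpha> \<in> Ob" and ap: "is_apex act Ob K"
      using ex_apex_orbit[OF \<open>\<alpha> \<in> \<Omega>\<close>] .
    show ?thesis
    proof (cases "K = J")
      case True
      then have "\<alpha> \<in> OmegaJ \<Omega> act J"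
        unfolding OmegaJ_def using Ob ap by blast
      have "act \<alpha> (e J * g) = act \<alpha> (e J * h)"
      proof (cases "act \<alpha> (e J)")
        case (Some \<beta>)
        then have "\<beta> \<in> OmegaJe \<Omega> act J (e J)"
          using \<open>\<alpha> \<in> OmegaJ \<Omega> act J\<close> unfolding OmegaJe_def by blast
        then show ?thesis
          using eq_on act_mult_Some[OF \<open>\<alpha> \<in> \<Omega>\<close> Some] by simp
      qed (simp add: act_mult_None \<open>\<alpha> \<in> \<Omega>\<close>)
      then show ?thesis
        using \<open>e J * g = g\<close> \<open>e J * h = h\<close> by simp
    next
      case False
      then show ?thesis
        using MJ_equivRM[OF regularJ_apex[OF Ob(1) ap] False \<open>is_Jclass J\<close> e g h]
          apex_equivRM_imp_act_eq[OF Ob(1) ap _ Ob(2)] by blast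
    qed
  qed
  then show "g = h"
    using faithful unfolding faithful_action_def by blast
qed

end

section \<open>Sufficiency of the conditions\<close>

text \<open>The induction step of \<open>same_action_imp_equivRM\<close> at an RM-irreducible \<open>J\<close>;
  \<open>below\<close> is the induction hypothesis.\<close>
locale Jclass_induction_step = semisimple_action \<Omega> act
  for \<Omega> :: "'b set" and act :: "'b \<Rightarrow> 'a::{semigroup_mult,finite} \<Rightarrow> 'b option" +
  fixes J :: "'a set" and e :: "'a set \<Rightarrow> 'a" and Ob :: "'b set"
  assumes rhodes: "\<And>s t :: 'a. (\<And>K. regularJ K \<Longrightarrow> equivJ K s t) \<Longrightarrow> s = t"
    and J: "is_Jclass J" "e J \<in> J" "e J * e J = e J"
    and Ob: "Ob \<in> strong_orbits \<Omega> act" "is_apex act Ob J"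
    and MJ_faithful: "faithful_action (OmegaJe \<Omega> act J (e J)) act (MJ e J)"
    and below: "\<And>K s t. regularJ K \<Longrightarrow> Jless K J \<Longrightarrow> same_action s t \<Longrightarrow> equivRM K s t"
begin

lemma mem_J_iff: "u \<in> J \<longleftrightarrow> leJ (e J) u \<and> leJ u (e J)"
  using J is_Jclass_eq_Jclass mem_Jclass_iff by metis

lemma same_action_J_leJ:
  assumes "u \<in> J" "same_action u v"
  shows "leJ (e J) v"
proof -
  obtain \<beta> where "\<beta> \<in> Ob" "act \<beta> u \<noteq> None"
    using apex_acts[OF Ob \<open>u \<in> J\<close>] by blast
  moreover have "\<beta> \<in> \<Omega>"
    using Ob(1) strong_orbits_subset calculation(1) by blast
  then have "act \<beta> v = act \<beta> u"
    using assms(2) unfolding same_action_def by simp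
  ultimately show ?thesis
    using apex_leJ[OF Ob J(2)] by metis
qed

lemma same_action_idempotent_eq:
  assumes h: "h = e J * h * e J" and same: "same_action h (e J)"
  shows "h = e J"
proof -
  have "leJ (e J) h"
    using same_action_J_leJ[OF J(2) same_action_sym[OF same]] .
  have hR: "h = e J * (h * e J)" and hL: "h = (e J * h) * e J"
    using h by (simp_all add: mult.assoc)
  have "e J \<in> rideal h" "h \<in> rideal (e J)"
    using leJ_mult_imp_rideal[of "e J" "h * e J"] \<open>leJ (e J) h\<close> hR by (metis, metis mult_mem_rideal)
  moreover have "e J \<in> lideal h" "h \<in> lideal (e J)"
    using leJ_mult_imp_lideal[of "e J" "e J * h"] \<open>leJ (e J) h\<close> hL by (metis, metis mult_mem_lideal)
  ultimately have "h \<in> Hgroup (e J)"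
    unfolding Hgroup_def by (simp add: rideal_eq_iff lideal_eq_iff)
  then have "h \<in> MJ e J"
    unfolding MJ_def using below same by blast
  moreover have "e J \<in> MJ e J"
    unfolding MJ_def Hgroup_def equivRM_def by blast
  moreover have "OmegaJe \<Omega> act J (e J) \<subseteq> \<Omega>"
    unfolding OmegaJe_def OmegaJ_def using act_closed strong_orbits_subset by blast
  ultimately show ?thesis
    using MJ_faithful same unfolding faithful_action_def same_action_def by blast
qed

text \<open>Sandwiching by \<open>p\<close>, \<open>q\<close> with \<open>p w q = e J\<close> maps the \<open>\<H>\<close>-class of \<open>w\<close> into the
  maximal subgroup at \<open>e J\<close>, where \<open>same_action_idempotent_eq\<close> applies.\<close>
lemma same_action_H_eq:
  assumes "w \<in> J" "w' \<in> rideal w" "w' \<in> lideal w" "same_action w w'"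
  shows "w = w'"
proof -
  obtain p q where pq: "e J = p * w * q" "p = e J * p" "q = q * e J"
    using sandwich_idempotent[OF J(3)] \<open>w \<in> J\<close> mem_J_iff by metis
  have "same_action (p * w' * q) (e J)"
    using pq(1) assms(4) same_action_sym same_action_mult_left same_action_mult_right by metis
  moreover have "p * w' * q = e J * (p * w' * q) * e J"
    using pq(2,3) by (metis mult.assoc)
  ultimately have pw'q: "p * w' * q = e J"
    using same_action_idempotent_eq by metis
  have "leJ (e J) (w * q)"
    using pq(1) by (metis leJ_mult_left mult.assoc)
  moreover have "leJ (w * q) (e J)"
    using \<open>w \<in> J\<close> mem_J_iff leJ_mult_rightI by blast
  ultimately
  have "w * q \<in> J"
    using mem_J_iff by blast
  then have "w \<in> rideal (w * q)"
    using Jclass_leJ[OF J(1) \<open>w \<in> J\<close>] leJ_mult_imp_rideal by blast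
  moreover have "w * q * p * (w * q) = w * q"
    using pq(1,3) by (metis mult.assoc)
  ultimately have wqpw: "w * (q * p) * w = w"
    using regular_fixes_rideal by (metis mult.assoc)
  have "w = w * (q * p) * w"
    using wqpw by simp
  also have "\<dots> = w * q * (p * w * q) * p * w"
    using wqpw by (simp add: mult.assoc)
  also have "\<dots> = w * q * (p * w' * q) * p * w"
    by (simp only: pq(1)[symmetric] pw'q)
  also have "\<dots> = (w * (q * p) * w') * (q * p) * w"
    by (simp add: mult.assoc)
  also have "\<dots> = w'"
    using regular_fixes_rideal[OF wqpw assms(2)] regular_fixes_lideal[OF wqpw assms(3)] by simp
  finally show ?thesis .
qed

lemma same_action_sandwich_eq:
  assumes "u \<in> J" "v \<in> rideal u" "same_action u v" "b \<in> J" "a * u * b \<in> J"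
  shows "a * v * b = a * u * b"
proof -
  have "u * b \<in> J"
    using Jclass_betweenI[OF J(1) assms(5) \<open>u \<in> J\<close>] by (simp add: mult.assoc)
  then have "u \<in> rideal (u * b)" "b \<in> lideal (u * b)"
    using Jclass_leJ[OF J(1)] assms(1,4) leJ_mult_imp_rideal leJ_mult_imp_lideal by blast+
  then have "v * b \<in> rideal (u * b)" "v * b \<in> lideal (u * b)"
    using \<open>v \<in> rideal u\<close> by (meson mult_mem_rideal rideal_trans, meson mult_mem_lideal lideal_trans)
  then have "u * b = v * b"
    using same_action_H_eq \<open>u * b \<in> J\<close> same_action_mult_right[OF assms(3)] by blast
  then show ?thesis
    by (simp add: mult.assoc)
qed

lemma equivJ_J_if_same_action:
  assumes "u \<in> J" "v \<in> J" "u \<in> rideal v" "v \<in> rideal u" "same_action u v"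
  shows "equivJ J u v"
  unfolding equivJ_def
  using same_action_sandwich_eq[OF assms(1,4,5)] same_action_sandwich_eq[OF assms(2,3) same_action_sym[OF assms(5)]]
  by metis

lemma same_action_left_mult_eq:
  assumes "same_action s t" "x \<in> J" "x * s \<in> J"
  shows "x * t \<in> J" "x * s = x * t"
proof -
  have same: "same_action (x * s) (x * t)"
    using same_action_mult_left[OF assms(1)] .
  show "x * t \<in> J"
    using same_action_J_leJ[OF assms(3) same] \<open>x \<in> J\<close> mem_J_iff leJ_mult_rightI by blast
  then have "x \<in> rideal (x * s)" "x \<in> rideal (x * t)"
    using Jclass_leJ[OF J(1)] assms(2,3) leJ_mult_imp_rideal by blast+
  then have R: "x * t \<in> rideal (x * s)" "x * s \<in> rideal (x * t)"
    using mult_mem_rideal rideal_trans by blast+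
  have "equivJ K (x * s) (x * t)" if "regularJ K" for K
  proof -
    obtain k where K: "is_Jclass K" "k \<in> K"
      using \<open>regularJ K\<close> unfolding regularJ_def by blast
    consider "K = J" | "Jless K J" | "\<not> leJ k (e J)"
      using Jle_iff_leJ[OF K(1) J(1) K(2) J(2)] unfolding Jless_def by blast
    then show ?thesis
    proof cases
      case 1
      then show ?thesis
        using equivJ_J_if_same_action \<open>x * t \<in> J\<close> assms(3) R same by blast
    next
      case 2
      then show ?thesis
        using below[OF \<open>regularJ K\<close>] same_action_mult_right[OF same]
        by (blast intro: equivJ_if_equivRM_mult_right)
    next
      case 3
      have "leJ (x * u * y) (e J)" for u y
        using \<open>x \<in> J\<close> mem_J_iff leJ_mult_rightI by blast
      then show ?thesis
        using equivRM_if_not_leJ[OF K 3] by (blast intro: equivJ_if_equivRM_mult_right)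
    qed
  qed
  then show "x * s = x * t"
    by (rule rhodes)
qed

lemma equivRM_J_if_same_action: "same_action s t \<Longrightarrow> equivRM J s t"
  unfolding equivRM_def using same_action_left_mult_eq same_action_sym by metis

end

context semisimple_action
begin

lemma same_action_imp_equivRM:
  fixes e :: "'a set \<Rightarrow> 'a"
  assumes rss: "rhodes_semisimple TYPE('a)"
    and idem: "\<And>J. regularJ J \<Longrightarrow> e J \<in> J \<and> e J * e J = e J"
    and conditions: "\<forall>J. RM_irreducible J \<longrightarrow> OmegaJ \<Omega> act J \<noteq> {} \<and>
       faithful_action (OmegaJe \<Omega> act J (e J)) act (MJ e J)"
  shows "regularJ J \<Longrightarrow> same_action s t \<Longrightarrow> equivRM J s t"
proof (induction "card (ideal2 J)" arbitrary: J s t rule: less_induct)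
  case less
  have J: "is_Jclass J"
    using less.prems(1) unfolding regularJ_def by blast
  have below: "equivRM K s' t'" if "regularJ K" "Jless K J" "same_action s' t'" for K s' t'
    using less.hyps that Jless_imp_card_ideal2_less J unfolding regularJ_def by blast
  show ?case
  proof (cases "RM_irreducible J")
    case False
    then show ?thesis
      using less.prems below unfolding RM_irreducible_def by blast
  next
    case True
    then obtain Ob where "Ob \<in> strong_orbits \<Omega> act" "is_apex act Ob J"
      using conditions unfolding OmegaJ_def by blast
    then interpret Jclass_induction_step \<Omega> act J e Ob
      using rss idem[OF less.prems(1)] J True conditions below
      by unfold_locales (auto simp: rhodes_semisimple_def)
    show ?thesis
      using equivRM_J_if_same_action less.prems(2) .
  qed
qed

end

theorem theorem2p4:
  fixes \<Omega> :: "'b set"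
    and act :: "'b \<Rightarrow> 'a::{semigroup_mult, finite} \<Rightarrow> 'b option"
    and e :: "'a set \<Rightarrow> 'a"
  assumes rss: "rhodes_semisimple TYPE('a)"
    and idem: "\<And>J. regularJ J \<Longrightarrow> e J \<in> J \<and> e J * e J = e J"
    and Sset: "partial_Sset \<Omega> act"
    and ss: "semisimple_Sset \<Omega> act"
  shows "faithful_action \<Omega> act UNIV \<longleftrightarrow>
    (\<forall>J. RM_irreducible J \<longrightarrow>
       OmegaJ \<Omega> act J \<noteq> {} \<and>
       faithful_action (OmegaJe \<Omega> act J (e J)) act (MJ e J))"
proof -
  interpret semisimple_action \<Omega> act
    using Sset ss by unfold_locales
  show ?thesis
  proof
    assume "faithful_action \<Omega> act UNIV"
    then show "\<forall>J. RM_irreducible J \<longrightarrow> OmegaJ \<Omega> act J \<noteq> {} \<and>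
       faithful_action (OmegaJe \<Omega> act J (e J)) act (MJ e J)"
      using faithful_imp_OmegaJ_nonempty faithful_imp_MJ_faithful idem
      unfolding RM_irreducible_def by blast
  next
    assume conditions: "\<forall>J. RM_irreducible J \<longrightarrow> OmegaJ \<Omega> act J \<noteq> {} \<and>
       faithful_action (OmegaJe \<Omega> act J (e J)) act (MJ e J)"
    have "s = t" if "same_action s t" for s t
      using rss same_action_imp_equivRM[OF rss idem conditions] same_action_mult_right[OF that]
      unfolding rhodes_semisimple_def by (blast intro: equivJ_if_equivRM_mult_right)
    then show "faithful_action \<Omega> act UNIV"
      using faithful_iff_same_action_eq by blast
  qed
qed

end
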